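(* For all integers $k,n\ge 1$, in the algebra $\mathfrak{H}=\mathbb{Q}\langle x,y\rangle$, $$S(z_{k+1}z_1^{\,n})=\sum_{t=1}^{n+1}\ \sum_{\substack{a_1+a_2+\dots+a_t=n+1-t\\ a_i\ge 0,\ i=1,\dots,t}} z_{a_t+k+1}\,z_{a_1+1}\,z_{a_2+1}\cdots z_{a_{t-1}+1}.$$
   Context: $\mathfrak{H}=\mathbb{Q}\langle x,y\rangle$ is the algebra of noncommutative polynomials in letters $x,y$ over $\mathbb{Q}$; $A^*$ denotes the set of words in $x,y$ including the empty word $1$. For a positive integer $k$, $z_k=x^{k-1}y$. Let $\sigma$ be the algebra automorphism of $\mathfrak{H}$ with $\sigma(x)=x$, $\sigma(y)=x+y$. The $\mathbb{Q}$-linear map $S:\mathfrak{H}\to\mathfrak{H}$ is defined by $S(1)=1$ and $S(wa)=\sigma(w)a$ for every word $w\in A^*$ and letter $a\in\{x,y\}$. For $t=1$ the word on the right is just $z_{a_1+k+1}$. *)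

theory Defs
  imports Complex_Main "HOL-Library.Poly_Mapping"
begin

datatype letter = LX | LY

datatype word = Word "letter list"

fun word_list :: "word \<Rightarrow> letter list" where
  "word_list (Word w) = w"

instantiation word :: monoid_add
begin
definition zero_word :: word where "zero_word = Word []"
definition plus_word :: "word \<Rightarrow> word \<Rightarrow> word" where
  "plus_word u v = Word (word_list u @ word_list v)"
instance
proof
  fix a b c :: word
  show "a + b + c = a + (b + c)" by (cases a; cases b; cases c) (simp add: plus_word_def)
  show "0 + a = a" by (cases a) (simp add: plus_word_def zero_word_def)
  show "a + 0 = a" by (cases a) (simp add: plus_word_def zero_word_def)
qed
end

text \<open>The algebra H = Q<x,y> of noncommutative polynomials: finitely supported
  rational coefficient functions on words, with convolution (concatenation) product.\<close>
type_synonym hpoly = "word \<Rightarrow>\<^sub>0 rat"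

definition hword :: "letter list \<Rightarrow> hpoly" where
  "hword w = Poly_Mapping.single (Word w) 1"

definition xH :: hpoly where "xH = hword [LX]"
definition yH :: hpoly where "yH = hword [LY]"

fun letterH :: "letter \<Rightarrow> hpoly" where
  "letterH LX = xH"
| "letterH LY = yH"

definition zH :: "nat \<Rightarrow> hpoly" where
  "zH k = hword (replicate (k - 1) LX @ [LY])"

definition lin_ext :: "(letter list \<Rightarrow> hpoly) \<Rightarrow> hpoly \<Rightarrow> hpoly" where
  "lin_ext f p = (\<Sum>w\<in>Poly_Mapping.keys p. Poly_Mapping.single 0 (Poly_Mapping.lookup p w) * f (word_list w))"

fun sigma_letter :: "letter \<Rightarrow> hpoly" where
  "sigma_letter LX = xH"
| "sigma_letter LY = xH + yH"

definition sigma_word :: "letter list \<Rightarrow> hpoly" where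
  "sigma_word w = prod_list (map sigma_letter w)"

definition sigma :: "hpoly \<Rightarrow> hpoly" where
  "sigma = lin_ext sigma_word"

definition S_word :: "letter list \<Rightarrow> hpoly" where
  "S_word w = (if w = [] then 1 else sigma_word (butlast w) * letterH (last w))"

definition S :: "hpoly \<Rightarrow> hpoly" where
  "S = lin_ext S_word"

end

theory Submission
  imports Defs
begin

(* Since z_(k+1) z_1^n = x^k y^(n+1), the definition of S gives S(z_(k+1) z_1^n) = x^k (x+y)^n y.
   Expanding (x+y)^n y letter by letter yields the sum of all words z_(c_1+1) ... z_(c_t+1) of
   weight n+1. The prefix x^k is absorbed into the first factor, giving z_(c_1+k+1), and rotating
   the index list c by one place moves that index to the last position, as in the stated sum. *)

(* Index lists c of the words z_(c_1+1) ... z_(c_t+1) of weight N, i.e. the compositions of N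
   with every part decreased by one. *)
definition composition_indices :: "nat \<Rightarrow> nat list set" where
  "composition_indices N = {c. c \<noteq> [] \<and> sum_list c + length c = N}"

lemma finite_composition_indices: "finite (composition_indices N)"
proof (rule finite_subset)
  show "composition_indices N \<subseteq> {c. set c \<subseteq> {..N} \<and> length c \<le> N}"
    using member_le_sum_list by (fastforce simp: composition_indices_def)
  show "finite {c. set c \<subseteq> {..N} \<and> length c \<le> N}"
    by (rule finite_lists_length_le) simp
qed

lemma composition_indices_Suc_0: "composition_indices (Suc 0) = {[0]}"
  by (auto simp: composition_indices_def neq_Nil_conv)

lemma composition_indices_Suc:
  assumes "N \<noteq> 0"
  shows "composition_indices (Suc N) =
     (\<lambda>c. Suc (hd c) # tl c) ` composition_indices N \<union> Cons 0 ` composition_indices N"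
proof (intro equalityI subsetI)
  fix c assume c: "c \<in> composition_indices (Suc N)"
  then obtain h r where c_eq: "c = h # r"
    by (cases c) (auto simp: composition_indices_def)
  show "c \<in> (\<lambda>c. Suc (hd c) # tl c) ` composition_indices N \<union> Cons 0 ` composition_indices N"
  proof (cases h)
    case 0
    with c c_eq assms have "r \<in> composition_indices N"
      by (cases r) (auto simp: composition_indices_def)
    with c_eq 0 show ?thesis by blast
  next
    case (Suc h')
    with c c_eq have "h' # r \<in> composition_indices N"
      by (auto simp: composition_indices_def)
    then have "Suc (hd (h' # r)) # tl (h' # r) \<in> (\<lambda>c. Suc (hd c) # tl c) ` composition_indices N"
      by (rule imageI)
    with c_eq Suc show ?thesis by simp
  qed
next
  fix c assume "c \<in> (\<lambda>c. Suc (hd c) # tl c) ` composition_indices N \<union> Cons 0 ` composition_indices N"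
  then obtain d where "d \<in> composition_indices N" "c = Suc (hd d) # tl d \<or> c = 0 # d"
    by blast
  then show "c \<in> composition_indices (Suc N)"
    by (cases d) (auto simp: composition_indices_def)
qed

lemma rotate1_composition_indices:
  "rotate1 ` composition_indices N = composition_indices N"
proof (intro equalityI subsetI)
  fix c assume c: "c \<in> composition_indices N"
  then obtain r h where c_eq: "c = r @ [h]"
    by (cases c rule: rev_cases) (auto simp: composition_indices_def)
  with c have "h # r \<in> composition_indices N"
    by (auto simp: composition_indices_def)
  moreover have "c = rotate1 (h # r)"
    by (simp add: c_eq)
  ultimately show "c \<in> rotate1 ` composition_indices N"
    by blast
next
  fix c assume "c \<in> rotate1 ` composition_indices N"
  then obtain d where "d \<in> composition_indices N" "c = rotate1 d"
    by blast
  then show "c \<in> composition_indices N"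
    by (cases d) (auto simp: composition_indices_def)
qed

lemma sum_composition_indices_by_length:
  fixes f :: "nat list \<Rightarrow> 'a::comm_monoid_add"
  shows "(\<Sum>t = 1..N. \<Sum>a \<in> {a. length a = t \<and> sum_list a = N - t}. f a) =
    (\<Sum>c\<in>composition_indices N. f c)"
proof -
  have split: "composition_indices N = (\<Union>t\<in>{1..N}. {a. length a = t \<and> sum_list a = N - t})"
    by (auto simp: composition_indices_def Suc_le_eq)
  have finite_fibres: "finite {a. length a = t \<and> sum_list a = N - t}" if "t \<in> {1..N}" for t
    by (rule finite_subset[OF _ finite_composition_indices[of N]]) (use that in \<open>auto simp: split\<close>)
  show ?thesis
    unfolding split by (rule sum.UNION_disjoint[symmetric]) (auto simp: finite_fibres)
qed

lemma power_add_mult_eq_sum_composition_indices: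
  fixes x y :: "'a::semiring_1"
  shows "(x + y) ^ m * y = (\<Sum>c\<in>composition_indices (Suc m). \<Prod>i\<leftarrow>c. x ^ i * y)"
proof (induction m)
  case 0
  show ?case by (simp add: composition_indices_Suc_0)
next
  case (Suc m)
  let ?C = "composition_indices (Suc m)"
  let ?P = "\<lambda>c. \<Prod>i\<leftarrow>c. x ^ i * y"
  let ?incr_hd = "\<lambda>c. Suc (hd c) # tl c"
  have x_P: "x * ?P c = ?P (?incr_hd c)" if "c \<in> ?C" for c
    using that by (cases c) (auto simp: composition_indices_def mult.assoc)
  have "(x + y) ^ Suc m * y = x * ((x + y) ^ m * y) + y * ((x + y) ^ m * y)"
    by (simp add: mult.assoc distrib_right)
  also have "\<dots> = (\<Sum>c\<in>?C. ?P (?incr_hd c)) + (\<Sum>c\<in>?C. ?P (0 # c))"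
    by (simp add: Suc sum_distrib_left x_P)
  also have "\<dots> = (\<Sum>c\<in>?incr_hd ` ?C. ?P c) + (\<Sum>c\<in>Cons 0 ` ?C. ?P c)"
  proof -
    have "inj_on ?incr_hd ?C"
      by (auto simp: inj_on_def composition_indices_def neq_Nil_conv)
    then show ?thesis by (simp add: sum.reindex)
  qed
  also have "\<dots> = (\<Sum>c\<in>composition_indices (Suc (Suc m)). ?P c)"
    unfolding composition_indices_Suc[of "Suc m", simplified]
    by (rule sum.union_disjoint[symmetric]) (auto simp: finite_composition_indices)
  finally show ?case .
qed

lemma hword_append: "hword (u @ v) = hword u * hword v"
  by (simp add: hword_def mult_single plus_word_def)

lemma hword_Nil: "hword [] = 1"
  by (simp add: hword_def zero_word_def[symmetric])

lemma hword_replicate: "hword (replicate n a) = hword [a] ^ n"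
proof (induction n)
  case (Suc n)
  have "hword (replicate (Suc n) a) = hword ([a] @ replicate n a)"
    by simp
  then show ?case
    by (simp only: hword_append Suc power_Suc)
qed (simp add: hword_Nil)

lemma lin_ext_hword: "lin_ext f (hword w) = f w"
  by (simp add: lin_ext_def hword_def)

lemma zH_Suc: "zH (Suc i) = xH ^ i * yH"
  by (simp add: zH_def xH_def yH_def hword_append hword_replicate)

lemma xH_power_mult_zH: "xH ^ k * zH (Suc i) = zH (Suc (i + k))"
  by (metis zH_Suc mult.assoc power_add add.commute)

lemma S_zH_mult_zH_1_power: "S (zH (k + 1) * zH 1 ^ n) = xH ^ k * ((xH + yH) ^ n * yH)"
proof -
  have "zH (k + 1) * zH 1 ^ n = hword (replicate k LX @ replicate n LY @ [LY])"
    by (simp add: zH_Suc xH_def yH_def hword_append hword_replicate power_commutes mult.assoc)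
  then have "S (zH (k + 1) * zH 1 ^ n) = sigma_word (replicate k LX @ replicate n LY) * yH"
    by (simp add: S_def lin_ext_hword S_word_def butlast_append)
  then show ?thesis
    by (simp add: sigma_word_def mult.assoc)
qed

(* The identity holds for all k and n. *)
theorem lemma2p2:
  fixes k n :: nat
  assumes "k \<ge> 1" and "n \<ge> 1"
  shows "S (zH (k + 1) * zH 1 ^ n) =
    (\<Sum>t = 1..n + 1. \<Sum>a \<in> {a :: nat list. length a = t \<and> sum_list a = n + 1 - t}.
        zH (last a + k + 1) * prod_list (map (\<lambda>ai. zH (ai + 1)) (butlast a)))"
proof -
  let ?C = "composition_indices (n + 1)"
  define g where "g a = zH (last a + k + 1) * (\<Prod>i\<leftarrow>butlast a. zH (i + 1))" for a
  have absorb_x_power: "xH ^ k * (\<Prod>i\<leftarrow>c. zH (Suc i)) = g (rotate1 c)" if "c \<noteq> []" for c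
  proof -
    from that obtain h r where "c = h # r"
      by (cases c) auto
    then show ?thesis
      by (simp add: g_def mult.assoc[symmetric] xH_power_mult_zH)
  qed
  have "S (zH (k + 1) * zH 1 ^ n) = (\<Sum>c\<in>?C. xH ^ k * (\<Prod>i\<leftarrow>c. zH (i + 1)))"
    unfolding S_zH_mult_zH_1_power power_add_mult_eq_sum_composition_indices
    by (simp add: sum_distrib_left zH_Suc)
  also have "\<dots> = (\<Sum>c\<in>?C. g (rotate1 c))"
    by (rule sum.cong) (auto simp: composition_indices_def absorb_x_power)
  also have "\<dots> = (\<Sum>a\<in>?C. g a)"
    using sum.reindex[OF inj_on_subset[OF inj_rotate1], of ?C g]
    by (simp add: rotate1_composition_indices)
  also have "\<dots> = (\<Sum>t = 1..n + 1. \<Sum>a \<in> {a. length a = t \<and> sum_list a = n + 1 - t}. g a)"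
    by (rule sum_composition_indices_by_length[symmetric])
  finally show ?thesis unfolding g_def .
qed

end
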